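(* Let $d\geq 2$, let $t\geq 2$ be an integer and $0\leq\epsilon<1$. Let $U$ be a $d\times d$ unitary matrix distributed according to an $\epsilon$-approximate unitary $t$-design. Then for any unit vectors $|\alpha\rangle,|\beta\rangle\in\mathbb{C}^d$ and any constant $0\leq\gamma\leq1-\epsilon$, $$\Pr_U\left[|\langle\alpha|U|\beta\rangle|^2>\frac{\gamma}{d}\right]\geq\frac{(1-\epsilon-\gamma)^2}{2(1+\epsilon)}.$$
   Context: A distribution $\{p_i,U_i\}$ over $d\times d$ unitaries is an $\epsilon$-approximate unitary $t$-design if for every polynomial $f$ homogeneous of degree $t$ in the entries of $U$ and homogeneous of degree $t$ in the entries of $U^*$, $(1-\epsilon)\int_{\mathrm{U}(d)}f(U)\,dU\leq\sum_ip_if(U_i)\leq(1+\epsilon)\int_{\mathrm{U}(d)}f(U)\,dU$, with $dU$ the Haar measure on $\mathrm{U}(d)$. *)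

theory Defs
  imports "HOL-Probability.Probability"
begin

text \<open>Conjugate transpose and unitary d x d matrices (d = CARD('n)).\<close>

definition adjoint_mat :: "complex^'n^'n \<Rightarrow> complex^'n^'n" where
  "adjoint_mat U = (\<chi> i j. cnj (U $ j $ i))"

definition unitary_mat :: "complex^'n^'n \<Rightarrow> bool" where
  "unitary_mat U \<longleftrightarrow> adjoint_mat U ** U = mat 1 \<and> U ** adjoint_mat U = mat 1"

definition unitary_group :: "(complex^'n::finite^'n) set" where
  "unitary_group = {U. unitary_mat U}"

text \<open>H is the Haar measure on U(d): a Borel probability measure on d x d complex
  matrices concentrated on U(d) and invariant under left and right multiplication
  by unitaries (this characterises the Haar measure uniquely).\<close>

definition is_haar_measure :: "(complex^'n::finite^'n) measure \<Rightarrow> bool" where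
  "is_haar_measure H \<longleftrightarrow>
     prob_space H \<and> sets H = sets borel \<and> emeasure H unitary_group = 1 \<and>
     (\<forall>V \<in> unitary_group. distr H borel (\<lambda>U. V ** U) = H \<and> distr H borel (\<lambda>U. U ** V) = H)"

text \<open>Polynomials homogeneous of degree t in the entries of U and homogeneous of
  degree t in the entries of U^* (i.e. in the conjugates of the entries of U):
  arbitrary complex linear combinations of the monomials
  U_{a1} ... U_{at} * conj(U_{b1}) ... conj(U_{bt}).\<close>

definition bihom_poly :: "nat \<Rightarrow> (complex^'n::finite^'n \<Rightarrow> complex) \<Rightarrow> bool" where
  "bihom_poly t f \<longleftrightarrow>
     (\<exists>c :: ('n \<times> 'n) list \<Rightarrow> ('n \<times> 'n) list \<Rightarrow> complex.
        f = (\<lambda>U. \<Sum>a\<in>{xs. length xs = t}. \<Sum>b\<in>{xs. length xs = t}.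
               c a b * (\<Prod>k<t. U $ fst (a!k) $ snd (a!k))
                     * (\<Prod>k<t. cnj (U $ fst (b!k) $ snd (b!k)))))"

definition approx_design ::
  "(complex^'n::finite^'n) measure \<Rightarrow> real \<Rightarrow> nat \<Rightarrow> (complex^'n^'n) pmf \<Rightarrow> bool" where
  "approx_design H \<epsilon> t D \<longleftrightarrow>
     set_pmf D \<subseteq> unitary_group \<and>
     (\<forall>f. bihom_poly t f \<and> (\<forall>U\<in>unitary_group. f U \<in> \<real> \<and> 0 \<le> Re (f U)) \<longrightarrow>
        (1 - \<epsilon>) * (\<integral>U. Re (f U) \<partial>H) \<le> measure_pmf.expectation D (\<lambda>U. Re (f U)) \<and>
        measure_pmf.expectation D (\<lambda>U. Re (f U)) \<le> (1 + \<epsilon>) * (\<integral>U. Re (f U) \<partial>H))"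

definition bra_ket :: "complex^'n \<Rightarrow> complex^'n^'n \<Rightarrow> complex^'n \<Rightarrow> complex" where
  "bra_ket \<alpha> U \<beta> = (\<Sum>i\<in>UNIV. cnj (\<alpha> $ i) * (U *v \<beta>) $ i)"

end

theory Submission
  imports Defs
begin

text \<open>Left invariance of the Haar measure lets one replace the bra \<open>\<langle>\<alpha>|\<close> by any other unit
  vector, so each Haar moment of \<open>|\<langle>\<alpha>|U|\<beta>\<rangle>|\<^sup>2\<close> equals that of a single matrix entry.
  Summing over the standard basis gives the first moment \<open>1/d\<close>, and a polarisation over
  the four phases \<open>1, \<i>, -1, -\<i>\<close> gives the second moment \<open>2/(d(d+1))\<close>. Both are
  expectations of balanced polynomials of degree at most two; multiplying by powers of
  \<open>\<Sum>\<^sub>i\<^sub>j |U\<^sub>i\<^sub>j|\<^sup>2/d\<close>, which is 1 on \<open>U(d)\<close>, raises the degree to \<open>t\<close>, so the design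
  reproduces them up to the factors \<open>1 \<plusminus> \<epsilon>\<close>. The Paley--Zygmund inequality turns the
  two moment bounds into the lower bound on the probability.\<close>

section \<open>Hermitian inner product and unitary matrices\<close>

definition cinner :: "complex^'n \<Rightarrow> complex^'n \<Rightarrow> complex" where
  "cinner x y = (\<Sum>i\<in>UNIV. cnj (x$i) * y$i)"

lemma norm_power2_vec_complex: "(norm (x::complex^'n))\<^sup>2 = (\<Sum>i\<in>UNIV. (cmod (x$i))\<^sup>2)"
  unfolding norm_vec_def L2_set_def by (simp add: sum_nonneg)

lemma cinner_self: "cinner x x = of_real ((norm x)\<^sup>2)"
  unfolding norm_power2_vec_complex cinner_def of_real_sum
  by (intro sum.cong refl) (metis complex_norm_square mult.commute)

lemma cinner_commute: "cinner y x = cnj (cinner x y)"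
  unfolding cinner_def by (simp add: mult.commute)

lemma cinner_add_left: "cinner (x + y) z = cinner x z + cinner y z"
  unfolding cinner_def by (simp add: sum.distrib algebra_simps)

lemma cinner_add_right: "cinner z (x + y) = cinner z x + cinner z y"
  unfolding cinner_def by (simp add: sum.distrib algebra_simps)

lemma cinner_diff_left: "cinner (x - y) z = cinner x z - cinner y z"
  unfolding cinner_def by (simp add: sum_subtractf algebra_simps)

lemma cinner_diff_right: "cinner z (x - y) = cinner z x - cinner z y"
  unfolding cinner_def by (simp add: sum_subtractf algebra_simps)

lemma cinner_smult_left: "cinner (c *s x) z = cnj c * cinner x z"
  unfolding cinner_def by (simp add: sum_distrib_left algebra_simps)

lemma cinner_smult_right: "cinner z (c *s x) = c * cinner z x"
  unfolding cinner_def by (simp add: sum_distrib_left algebra_simps)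

lemma cinner_axis_left: "cinner (axis i 1) y = y $ i"
proof -
  have "(\<lambda>j. cnj (axis i 1 $ j) * y $ j) = (\<lambda>j. if j = i then y $ i else 0)"
    by (auto simp: axis_def)
  then show ?thesis
    unfolding cinner_def by (simp only:) simp
qed

lemma cinner_adjoint: "cinner x (A *v y) = cinner (adjoint_mat A *v x) y"
proof -
  have "cinner x (A *v y) = (\<Sum>i\<in>UNIV. \<Sum>j\<in>UNIV. cnj (x$i) * (A$i$j * y$j))"
    by (simp add: cinner_def matrix_vector_mult_def sum_distrib_left)
  also have "\<dots> = (\<Sum>j\<in>UNIV. \<Sum>i\<in>UNIV. cnj (x$i) * (A$i$j * y$j))"
    by (rule sum.swap)
  also have "\<dots> = cinner (adjoint_mat A *v x) y"
    by (simp add: cinner_def adjoint_mat_def matrix_vector_mult_def sum_distrib_left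
        sum_distrib_right mult_ac)
  finally show ?thesis .
qed

lemma norm_eq_iff_cinner_self_eq: "norm x = norm y \<longleftrightarrow> cinner x x = cinner (y::complex^'n) y"
  unfolding cinner_self of_real_eq_iff by (metis norm_ge_zero power2_eq_iff_nonneg)

lemma norm_axis_complex: "norm (axis i (1::complex)) = 1"
  using cinner_axis_left[of i "axis i 1"] unfolding cinner_self
  by (simp flip: of_real_power)

lemma bra_ket_eq_cinner: "bra_ket a U b = cinner a (U *v b)"
  by (simp add: bra_ket_def cinner_def)

lemma unitary_cinner: "unitary_mat U \<Longrightarrow> cinner (U *v x) (U *v y) = cinner x y"
  by (simp add: unitary_mat_def cinner_adjoint[of "U *v x"] matrix_vector_mul_assoc)

lemma unitary_norm: "unitary_mat U \<Longrightarrow> norm (U *v x) = norm x"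
  using unitary_cinner norm_eq_iff_cinner_self_eq by blast

lemma adjoint_mat_1: "adjoint_mat (mat 1 :: complex^'n^'n) = mat 1"
  by (simp add: adjoint_mat_def mat_def vec_eq_iff)

lemma unitary_mat_1: "unitary_mat (mat 1 :: complex^'n^'n)"
  by (simp add: unitary_mat_def adjoint_mat_1 matrix_mul_lid)

definition householder_mat :: "complex \<Rightarrow> complex^'n \<Rightarrow> complex^'n^'n" where
  "householder_mat k w = (\<chi> i j. (if i = j then 1 else 0) - k * w$i * cnj (w$j))"

lemma householder_mat_adjoint:
  "k \<in> \<real> \<Longrightarrow> adjoint_mat (householder_mat k w) = householder_mat k w"
  unfolding householder_mat_def adjoint_mat_def by (simp add: vec_eq_iff Reals_cnj_iff mult_ac)

lemma householder_mat_apply: "householder_mat k w *v x = x - (k * cinner w x) *s w"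
proof -
  have "(householder_mat k w *v x) $ i
      = (\<Sum>j\<in>UNIV. (if i = j then x$j else 0) - k * w$i * (cnj (w$j) * x$j))" for i
    unfolding householder_mat_def matrix_vector_mult_def
    by (simp add: algebra_simps, intro sum.cong) auto
  then show ?thesis
    by (simp add: vec_eq_iff sum_subtractf cinner_def sum_distrib_left mult_ac)
qed

lemma householder_mat_unitary:
  assumes "k \<in> \<real>" and "k * cinner w w = 2"
  shows "unitary_mat (householder_mat k w)"
proof -
  let ?V = "householder_mat k w"
  have "?V *v (?V *v x) = x" for x
  proof -
    have "cinner w (?V *v x) = - cinner w x"
      using assms(2) unfolding householder_mat_apply cinner_diff_right cinner_smult_right
      by (simp add: algebra_simps)
    then show ?thesis
      by (simp add: householder_mat_apply[of k w "?V *v x"] vec_eq_iff algebra_simps)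
         (simp add: householder_mat_apply)
  qed
  then have "?V ** ?V = mat 1"
    by (metis matrix_vector_mul_assoc matrix_eq matrix_vector_mul_lid)
  then show ?thesis by (simp add: unitary_mat_def householder_mat_adjoint[OF assms(1)])
qed

text \<open>The Householder reflection along \<open>w = a - c a'\<close>, with the phase \<open>c\<close> chosen so that
  \<open>cinner w a\<close> is real, swaps \<open>a\<close> and \<open>c a'\<close>.\<close>

lemma unitary_map_unit_vector:
  fixes a a' :: "complex^'n"
  assumes "norm a = 1" and "norm a' = 1"
  obtains V c where "unitary_mat V" and "cmod c = 1" and "adjoint_mat V *v a = c *s a'"
proof -
  define p where "p = cinner a' a"
  define c where "c = (if p = 0 then 1 else p / of_real (cmod p))"
  have c: "cmod c = 1"
    unfolding c_def by (simp add: norm_divide)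
  have cp: "cnj c * p = of_real (cmod p)"
    unfolding c_def
    by (simp add: field_simps) (metis complex_norm_square mult.commute power2_eq_square of_real_mult)
  have cc: "c * cnj c = 1"
    using c by (metis complex_norm_square of_real_1 power_one)
  have aa: "cinner a a = 1" and aa': "cinner a' a' = 1"
    using assms by (simp_all add: cinner_self)
  define w where "w = a - c *s a'"
  have wa: "cinner w a = 1 - of_real (cmod p)"
    unfolding w_def cinner_diff_left cinner_smult_left aa p_def[symmetric] cp ..
  have ww: "cinner w w = 2 * cinner w a"
  proof -
    have "cinner w w = cinner w a - c * cinner w a'"
      unfolding w_def[symmetric] by (simp add: w_def cinner_diff_right cinner_smult_right)
    also have "cinner w a' = cnj p - cnj c"
      unfolding w_def cinner_diff_left cinner_smult_left aa' p_def using cinner_commute by simp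
    also have "c * (cnj p - cnj c) = cnj (cnj c * p) - c * cnj c"
      by (simp add: algebra_simps)
    finally show ?thesis
      unfolding cp cc wa by simp
  qed
  show thesis
  proof (cases "w = 0")
    case True
    then show thesis
      using that[OF unitary_mat_1 c] by (simp add: w_def adjoint_mat_1 matrix_vector_mul_lid)
  next
    case False
    define k where "k = complex_of_real (2 / (norm w)\<^sup>2)"
    have kww: "k * cinner w w = 2"
      using False unfolding k_def cinner_self by (simp flip: of_real_mult)
    have "k \<in> \<real>"
      unfolding k_def by simp
    moreover have "householder_mat k w *v a = c *s a'"
      using kww unfolding householder_mat_apply ww by (simp add: w_def mult.left_commute)
    ultimately show thesis
      using that[OF householder_mat_unitary[OF _ kww] c] by (simp add: householder_mat_adjoint)
  qed
qed

lemma bra_ket_matrix_mult: "bra_ket a (V ** U) b = bra_ket (adjoint_mat V *v a) U b"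
  by (simp add: bra_ket_eq_cinner cinner_adjoint matrix_vector_mul_assoc[symmetric])

lemma bra_ket_smult: "bra_ket (c *s a) U b = cnj c * bra_ket a U b"
  by (simp add: bra_ket_eq_cinner cinner_smult_left)

lemma bra_ket_axis: "bra_ket (axis i 1) U b = (U *v b) $ i"
  by (simp add: bra_ket_eq_cinner cinner_axis_left)

lemma continuous_on_bra_ket: "continuous_on S (\<lambda>U::complex^'n^'n. bra_ket a U b)"
  unfolding bra_ket_def matrix_vector_mult_def by (intro continuous_intros)

lemma norm_bra_ket_le:
  fixes U :: "complex^'n::finite^'n"
  assumes "unitary_mat U"
  shows "cmod (bra_ket a U b) \<le> real CARD('n) * norm a * norm b"
proof -
  have "cmod (bra_ket a U b) \<le> (\<Sum>i\<in>UNIV. cmod (a$i) * cmod ((U *v b)$i))"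
    unfolding bra_ket_def using norm_sum[of "\<lambda>i. cnj (a$i) * (U *v b)$i" UNIV]
    by (simp add: norm_mult)
  also have "\<dots> \<le> (\<Sum>i\<in>(UNIV::'n set). norm a * norm b)"
    using unitary_norm[OF assms, of b]
    by (intro sum_mono mult_mono) (auto simp: Finite_Cartesian_Product.norm_nth_le
        intro: order.trans[OF Finite_Cartesian_Product.norm_nth_le])
  finally show ?thesis by simp
qed

lemma sum_cmod_bra_ket_axis:
  assumes "unitary_mat U" and "norm b = 1"
  shows "(\<Sum>i\<in>UNIV. (cmod (bra_ket (axis i 1) U b))\<^sup>2) = 1"
  unfolding bra_ket_axis norm_power2_vec_complex[symmetric] unitary_norm[OF assms(1)] assms(2)
  by simp

lemma matrix_vector_mult_axis_nth: "(A *v axis j 1) $ i = A$i$(j::'n::finite)"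
proof -
  have "(\<lambda>k. A$i$k * axis j 1 $ k) = (\<lambda>k. if k = j then A$i$j else (0::'a::semiring_1))"
    by (auto simp: axis_def)
  then show ?thesis
    by (simp only: matrix_vector_mult_def vec_lambda_beta) simp
qed

lemma unitary_sum_cmod_entries:
  fixes U :: "complex^'n::finite^'n"
  assumes "unitary_mat U"
  shows "(\<Sum>i\<in>UNIV. \<Sum>j\<in>UNIV. (cmod (U$i$j))\<^sup>2) = real CARD('n)"
proof -
  have "(\<Sum>i\<in>UNIV. (cmod (U$i$j))\<^sup>2) = 1" for j
    using sum_cmod_bra_ket_axis[OF assms norm_axis_complex, of j]
    by (simp add: bra_ket_axis matrix_vector_mult_axis_nth)
  then show ?thesis
    by (subst sum.swap) simp
qed

section \<open>Haar moments of matrix elements\<close>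

lemma is_haar_measure_prob_space: "is_haar_measure H \<Longrightarrow> prob_space H"
  by (simp add: is_haar_measure_def)

lemma AE_haar_unitary:
  assumes "is_haar_measure H"
  shows "AE U in H. unitary_mat U"
proof -
  interpret prob_space H
    using assms by (rule is_haar_measure_prob_space)
  have "measure H unitary_group = 1"
    using assms by (simp add: is_haar_measure_def measure_def)
  then show ?thesis
    using AE_prob_1 by (force simp: unitary_group_def)
qed

lemma haar_measurable_continuous:
  assumes "is_haar_measure H" and "continuous_on UNIV F"
  shows "F \<in> borel_measurable H"
  using borel_measurable_continuous_onI[OF assms(2)] assms(1)
  by (simp add: is_haar_measure_def cong: measurable_cong_sets)

lemma haar_integrable_bounded:
  fixes F :: "complex^'n::finite^'n \<Rightarrow> real"
  assumes "is_haar_measure H" and "continuous_on UNIV F"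
    and "\<And>U. unitary_mat U \<Longrightarrow> \<bar>F U\<bar> \<le> B"
  shows "integrable H F"
proof -
  interpret prob_space H
    using assms(1) by (rule is_haar_measure_prob_space)
  show ?thesis
    using AE_haar_unitary[OF assms(1)] assms(3)
    by (intro integrable_const_bound[where B=B] haar_measurable_continuous[OF assms(1,2)])
       (auto elim: AE_mp)
qed

lemma haar_integral_cong_unitary:
  fixes F G :: "complex^'n::finite^'n \<Rightarrow> real"
  assumes "is_haar_measure H" and "continuous_on UNIV F" and "continuous_on UNIV G"
    and "\<And>U. unitary_mat U \<Longrightarrow> F U = G U"
  shows "integral\<^sup>L H F = integral\<^sup>L H G"
  using AE_haar_unitary[OF assms(1)] assms(4)
  by (intro integral_cong_AE haar_measurable_continuous[OF assms(1)] assms(2,3)) (auto elim: AE_mp)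

lemma haar_integral_left_mult:
  fixes F :: "complex^'n::finite^'n \<Rightarrow> real"
  assumes H: "is_haar_measure H" and "unitary_mat V" and F: "continuous_on UNIV F"
  shows "(\<integral>U. F (V ** U) \<partial>H) = (\<integral>U. F U \<partial>H)"
proof -
  have "(\<lambda>U. V ** U) \<in> measurable H borel"
    unfolding matrix_matrix_mult_def
    by (intro haar_measurable_continuous[OF H] continuous_intros)
  then have "(\<integral>U. F (V ** U) \<partial>H) = (\<integral>U. F U \<partial>distr H borel (\<lambda>U. V ** U))"
    by (rule integral_distr[symmetric, OF _ borel_measurable_continuous_onI[OF F]])
  also have "distr H borel (\<lambda>U. V ** U) = H"
    using assms by (simp add: is_haar_measure_def unitary_group_def)
  finally show ?thesis .
qed

lemma haar_moment_bra_independent: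
  assumes H: "is_haar_measure H" and "norm a = 1" and "norm a' = 1"
  shows "(\<integral>U. (cmod (bra_ket a U b))^k \<partial>H) = (\<integral>U. (cmod (bra_ket a' U b))^k \<partial>H)"
proof -
  obtain V c where V: "unitary_mat V" and "cmod c = 1" and Va: "adjoint_mat V *v a = c *s a'"
    using unitary_map_unit_vector[OF assms(2,3)] .
  have "(\<integral>U. (cmod (bra_ket a U b))^k \<partial>H) = (\<integral>U. (cmod (bra_ket a (V ** U) b))^k \<partial>H)"
    by (rule haar_integral_left_mult[OF H V, symmetric])
       (intro continuous_intros continuous_on_bra_ket)
  also have "\<dots> = (\<integral>U. (cmod (bra_ket a' U b))^k \<partial>H)"
    by (simp add: bra_ket_matrix_mult Va bra_ket_smult norm_mult \<open>cmod c = 1\<close>)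
  finally show ?thesis .
qed

lemma haar_integrable_bra_ket_powers:
  fixes H :: "(complex^'n::finite^'n) measure"
  assumes H: "is_haar_measure H"
  shows "integrable H (\<lambda>U. (cmod (bra_ket a U b))^k * (cmod (bra_ket a' U b'))^l)"
proof (rule haar_integrable_bounded[OF H])
  show "continuous_on UNIV (\<lambda>U. (cmod (bra_ket a U b))^k * (cmod (bra_ket a' U b'))^l)"
    by (intro continuous_intros continuous_on_bra_ket)
  fix U :: "complex^'n^'n"
  assume "unitary_mat U"
  then show "\<bar>(cmod (bra_ket a U b))^k * (cmod (bra_ket a' U b'))^l\<bar>
     \<le> (real CARD('n) * norm a * norm b)^k * (real CARD('n) * norm a' * norm b')^l"
    by (simp add: abs_mult power_abs, intro mult_mono power_mono norm_bra_ket_le) auto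
qed

lemma haar_integrable_bra_ket_power:
  "is_haar_measure H \<Longrightarrow> integrable H (\<lambda>U. (cmod (bra_ket a U b))^k)"
  using haar_integrable_bra_ket_powers[where l = 0] by simp

lemma haar_integral_cmod_bra_ket_sq:
  fixes H :: "(complex^'n::finite^'n) measure"
  assumes H: "is_haar_measure H" and "norm a = 1" and "norm b = 1"
  shows "(\<integral>U. (cmod (bra_ket a U b))\<^sup>2 \<partial>H) = 1 / real CARD('n)"
proof -
  interpret prob_space H
    using H by (rule is_haar_measure_prob_space)
  have "1 = (\<integral>U. (\<Sum>i\<in>UNIV. (cmod (bra_ket (axis i 1) U b))\<^sup>2) \<partial>H)"
    using haar_integral_cong_unitary[OF H, of "\<lambda>_. 1"] sum_cmod_bra_ket_axis[OF _ \<open>norm b = 1\<close>]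
    by (simp add: prob_space continuous_intros continuous_on_bra_ket)
  also have "\<dots> = (\<Sum>i\<in>UNIV. (\<integral>U. (cmod (bra_ket (axis i 1) U b))\<^sup>2 \<partial>H))"
    using haar_integrable_bra_ket_power[OF H] by (simp add: integral_sum)
  also have "\<dots> = real CARD('n) * (\<integral>U. (cmod (bra_ket a U b))\<^sup>2 \<partial>H)"
    using haar_moment_bra_independent[OF H norm_axis_complex \<open>norm a = 1\<close>] by simp
  finally show ?thesis
    by (simp add: field_simps)
qed

lemma cmod_pow4_phase_sum:
  fixes z y :: complex
  shows "(cmod (z + y))^4 + (cmod (z - \<i> * y))^4 + (cmod (z - y))^4 + (cmod (z + \<i> * y))^4
     = 4 * (((cmod z)\<^sup>2 + (cmod y)\<^sup>2)\<^sup>2 + 2 * (cmod z)\<^sup>2 * (cmod y)\<^sup>2)"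
proof -
  have pow4: "(cmod w)^4 = ((Re w)\<^sup>2 + (Im w)\<^sup>2)\<^sup>2" for w
    by (simp flip: cmod_power2 power_mult)
  show ?thesis
    unfolding pow4 cmod_power2 by (simp add: algebra_simps power2_eq_square power4_eq_xxxx)
qed

text \<open>Polarisation: the four unit vectors \<open>(a + \<omega> a') / \<surd>2\<close>, \<open>\<omega> \<in> {1, \<i>, -1, -\<i>}\<close>, have the same
  fourth moment as \<open>a\<close>, and averaging them isolates the mixed term.\<close>

lemma haar_integral_cross_moment:
  fixes H :: "(complex^'n::finite^'n) measure"
  assumes H: "is_haar_measure H" and a: "norm a = 1" and a': "norm a' = 1"
    and orth: "cinner a a' = 0"
  shows "(\<integral>U. (cmod (bra_ket a U b))\<^sup>2 * (cmod (bra_ket a' U b))\<^sup>2 \<partial>H)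
       = (\<integral>U. (cmod (bra_ket a U b))^4 \<partial>H) / 2"
proof -
  define s where "s = complex_of_real (1 / sqrt 2)"
  define v where "v \<omega> = s *s (a + \<omega> *s a')" for \<omega>
  define m where "m = (\<integral>U. (cmod (bra_ket a U b))^4 \<partial>H)"
  define F where "F \<omega> U = (cmod (bra_ket (v \<omega>) U b))^4" for \<omega> U
  have ss: "cnj s * s = 1/2"
    by (simp add: s_def flip: of_real_mult)
  have nv: "norm (v \<omega>) = 1" if "cmod \<omega> = 1" for \<omega>
  proof -
    have "cnj \<omega> * \<omega> = 1"
      using that by (metis complex_norm_square mult.commute of_real_1 power_one)
    moreover have "cinner a' a = 0"
      using orth by (metis cinner_commute complex_cnj_zero)
    moreover have "cinner a a = 1" and "cinner a' a' = 1"
      using a a' by (simp_all add: cinner_self)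
    ultimately have "cinner (v \<omega>) (v \<omega>) = cnj s * s * (1 + cnj \<omega> * \<omega>)"
      by (simp add: v_def cinner_add_left cinner_add_right cinner_smult_left
          cinner_smult_right orth algebra_simps del: cinner_self)
    then have "cinner (v \<omega>) (v \<omega>) = 1"
      using ss \<open>cnj \<omega> * \<omega> = 1\<close> by simp
    then show ?thesis
      using norm_eq_iff_cinner_self_eq[of "v \<omega>" a] a by (simp add: cinner_self)
  qed
  have mF: "integral\<^sup>L H (F \<omega>) = m" if "cmod \<omega> = 1" for \<omega>
    unfolding F_def m_def by (rule haar_moment_bra_independent[OF H nv[OF that] a])
  have F_sum: "F 1 U + F \<i> U + F (-1) U + F (-\<i>) U
      = (cmod (bra_ket a U b))^4 + (cmod (bra_ket a' U b))^4
        + 4 * ((cmod (bra_ket a U b))\<^sup>2 * (cmod (bra_ket a' U b))\<^sup>2)" for U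
  proof -
    let ?z = "bra_ket a U b" and ?y = "bra_ket a' U b"
    have F4: "F \<omega> U = (cmod (?z + cnj \<omega> * ?y))^4 / 4" for \<omega>
    proof -
      have "bra_ket (v \<omega>) U b = cnj s * (bra_ket a U b + cnj \<omega> * bra_ket a' U b)"
        unfolding v_def bra_ket_eq_cinner cinner_smult_left cinner_add_left ..
      moreover have "cmod (cnj s) = 1 / sqrt 2"
        unfolding s_def complex_mod_cnj norm_of_real by simp
      then have "(cmod (cnj s))^4 = 1/4"
        by (simp add: power_divide power4_eq_xxxx)
      ultimately show ?thesis
        by (simp only: F_def norm_mult power_mult_distrib)
    qed
    have "F 1 U + F \<i> U + F (-1) U + F (-\<i>) U
        = ((cmod (?z + ?y))^4 + (cmod (?z - \<i> * ?y))^4 + (cmod (?z - ?y))^4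
            + (cmod (?z + \<i> * ?y))^4) / 4"
      unfolding F4 by simp
    also have "\<dots> = ((cmod ?z)\<^sup>2 + (cmod ?y)\<^sup>2)\<^sup>2 + 2 * (cmod ?z)\<^sup>2 * (cmod ?y)\<^sup>2"
      unfolding cmod_pow4_phase_sum by simp
    finally show ?thesis
      by (simp add: power2_eq_square power4_eq_xxxx algebra_simps)
  qed
  have int: "integrable H (F \<omega>)" for \<omega>
    using haar_integrable_bra_ket_power[OF H] by (simp add: F_def[abs_def])
  have "4 * m = (\<integral>U. F 1 U + F \<i> U + F (-1) U + F (-\<i>) U \<partial>H)"
    using int by (simp add: mF)
  also have "\<dots> = m + m + 4 * (\<integral>U. (cmod (bra_ket a U b))\<^sup>2 * (cmod (bra_ket a' U b))\<^sup>2 \<partial>H)"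
    unfolding F_sum
    using haar_moment_bra_independent[OF H a' a]
    by (simp add: m_def haar_integrable_bra_ket_power[OF H] haar_integrable_bra_ket_powers[OF H])
  finally show ?thesis
    by (simp add: m_def)
qed

lemma haar_integral_cmod_bra_ket_pow4:
  fixes H :: "(complex^'n::finite^'n) measure"
  assumes H: "is_haar_measure H" and a: "norm a = 1" and b: "norm b = 1"
  shows "(\<integral>U. (cmod (bra_ket a U b))^4 \<partial>H) = 2 / (real CARD('n) * (real CARD('n) + 1))"
proof -
  interpret prob_space H
    using H by (rule is_haar_measure_prob_space)
  fix p :: 'n
  define e :: "'n \<Rightarrow> complex^'n" where "e i = axis i 1" for i
  define m where "m = (\<integral>U. (cmod (bra_ket a U b))^4 \<partial>H)"
  define d where "d = real CARD('n)"
  have m_e: "(\<integral>U. (cmod (bra_ket (e i) U b))^4 \<partial>H) = m" for i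
    unfolding m_def e_def by (rule haar_moment_bra_independent[OF H norm_axis_complex a])
  have cross: "(\<integral>U. (cmod (bra_ket (e p) U b))\<^sup>2 * (cmod (bra_ket (e j) U b))\<^sup>2 \<partial>H)
      = (if j = p then m else m / 2)" for j
  proof (cases "j = p")
    case True
    then show ?thesis
      using m_e by (simp flip: power_add)
  next
    case False
    have e_orth: "cinner (e p) (e j) = 0"
      using False by (simp add: e_def cinner_axis_left) (simp add: axis_def)
    show ?thesis
      using False haar_integral_cross_moment[OF H _ _ e_orth] m_e by (simp add: e_def norm_axis_complex)
  qed
  have "1 / d = (\<integral>U. (cmod (bra_ket (e p) U b))\<^sup>2 \<partial>H)"
    unfolding d_def e_def by (rule haar_integral_cmod_bra_ket_sq[OF H norm_axis_complex b, symmetric])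
  also have "\<dots> = (\<integral>U. (\<Sum>j\<in>UNIV. (cmod (bra_ket (e p) U b))\<^sup>2 * (cmod (bra_ket (e j) U b))\<^sup>2) \<partial>H)"
    using sum_cmod_bra_ket_axis[OF _ b]
    by (intro haar_integral_cong_unitary[OF H])
       (simp_all add: e_def continuous_intros continuous_on_bra_ket flip: sum_distrib_left)
  also have "\<dots> = (\<Sum>j\<in>UNIV. (if j = p then m else m / 2))"
    using haar_integrable_bra_ket_powers[OF H] by (simp add: integral_sum cross)
  also have "\<dots> = (\<Sum>j\<in>UNIV. m / 2 + (if j = p then m / 2 else 0))"
    by (intro sum.cong) auto
  also have "\<dots> = d * m / 2 + m / 2"
    by (simp add: sum.distrib d_def)
  finally have "m * (d * (d + 1)) = 2"
    by (simp add: d_def field_simps)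
  moreover have "d * (d + 1) \<noteq> 0"
    by (simp add: d_def)
  ultimately show ?thesis
    unfolding m_def[symmetric] d_def[symmetric] by (simp add: eq_divide_eq)
qed

section \<open>Balanced polynomials and approximate designs\<close>

definition entry_monomial :: "('n \<times> 'n) list \<Rightarrow> complex^'n^'n \<Rightarrow> complex" where
  "entry_monomial a U = (\<Prod>x\<leftarrow>a. U $ fst x $ snd x)"

lemma prod_lessThan_nth: "length xs = n \<Longrightarrow> (\<Prod>k<n. f (xs!k)) = (\<Prod>x\<leftarrow>xs. f x)"
proof (induction xs arbitrary: n)
  case (Cons x xs)
  then show ?case
    by (auto simp del: prod.lessThan_Suc simp add: prod.lessThan_Suc_shift)
qed simp

lemma bihom_poly_iff_entry_monomials:
  "bihom_poly t f \<longleftrightarrow> (\<exists>c. f = (\<lambda>U. \<Sum>a\<in>{xs. length xs = t}. \<Sum>b\<in>{xs. length xs = t}.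
     c a b * entry_monomial a U * cnj (entry_monomial b U)))"
proof -
  have monomial: "(\<Prod>k<t. U $ fst (a!k) $ snd (a!k)) = entry_monomial a U"
    if "length a = t" for a and U :: "complex^'n^'n"
    using prod_lessThan_nth[OF that, of "\<lambda>x. U $ fst x $ snd x"] by (simp add: entry_monomial_def)
  have "(\<Sum>a\<in>{xs. length xs = t}. \<Sum>b\<in>{xs. length xs = t}.
          c a b * (\<Prod>k<t. U $ fst (a!k) $ snd (a!k)) * (\<Prod>k<t. cnj (U $ fst (b!k) $ snd (b!k))))
      = (\<Sum>a\<in>{xs. length xs = t}. \<Sum>b\<in>{xs. length xs = t}.
          c a b * entry_monomial a U * cnj (entry_monomial b U))" for c and U :: "complex^'n^'n"
    by (intro sum.cong refl) (simp add: monomial flip: cnj_prod)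
  note eq = this
  show ?thesis
    unfolding bihom_poly_def eq ..
qed

lemma entry_monomial_append:
  "entry_monomial (a @ a') U = entry_monomial a U * entry_monomial a' U"
  by (simp add: entry_monomial_def)

lemma continuous_on_bihom_poly: "bihom_poly t f \<Longrightarrow> continuous_on S f"
  unfolding bihom_poly_def by (auto intro!: continuous_intros)

lemma bihom_poly_add:
  assumes "bihom_poly t f" and "bihom_poly t g"
  shows "bihom_poly t (\<lambda>U. f U + g U)"
proof -
  from assms obtain c d where
    "f = (\<lambda>U. \<Sum>a\<in>{xs. length xs = t}. \<Sum>b\<in>{xs. length xs = t}.
       c a b * entry_monomial a U * cnj (entry_monomial b U))" and
    "g = (\<lambda>U. \<Sum>a\<in>{xs. length xs = t}. \<Sum>b\<in>{xs. length xs = t}.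
       d a b * entry_monomial a U * cnj (entry_monomial b U))"
    unfolding bihom_poly_iff_entry_monomials by blast
  then show ?thesis
    unfolding bihom_poly_iff_entry_monomials
    by (intro exI[of _ "\<lambda>a b. c a b + d a b"]) (simp add: sum.distrib algebra_simps)
qed

lemma bihom_poly_cmult:
  assumes "bihom_poly t f"
  shows "bihom_poly t (\<lambda>U. r * f U)"
proof -
  from assms obtain c where
    "f = (\<lambda>U. \<Sum>a\<in>{xs. length xs = t}. \<Sum>b\<in>{xs. length xs = t}.
       c a b * entry_monomial a U * cnj (entry_monomial b U))"
    unfolding bihom_poly_iff_entry_monomials by blast
  then show ?thesis
    unfolding bihom_poly_iff_entry_monomials
    by (intro exI[of _ "\<lambda>a b. r * c a b"]) (simp add: sum_distrib_left algebra_simps)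
qed

lemma bihom_poly_sum:
  assumes "finite S" and "\<And>i. i \<in> S \<Longrightarrow> bihom_poly t (f i)"
  shows "bihom_poly t (\<lambda>U. \<Sum>i\<in>S. f i U)"
  using assms
proof (induction S rule: finite_induct)
  case empty
  show ?case
    unfolding bihom_poly_iff_entry_monomials by (intro exI[of _ "\<lambda>a b. 0"]) simp
qed (simp add: bihom_poly_add)

lemma bihom_poly_const: "bihom_poly 0 (\<lambda>U. r)"
  unfolding bihom_poly_iff_entry_monomials
  by (intro exI[of _ "\<lambda>a b. r"]) (simp add: entry_monomial_def)

lemma finite_lists_length_eq_UNIV: "finite {xs :: 'a::finite list. length xs = n}"
  using finite_lists_length_eq[of "UNIV :: 'a set" n] by simp

lemma bihom_poly_entry_cnj_entry: "bihom_poly 1 (\<lambda>U. U$i$j * cnj (U$k$l))"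
  unfolding bihom_poly_iff_entry_monomials
  by (intro exI[of _ "\<lambda>a b. if b = [(k,l)] then if a = [(i,j)] then 1 else 0 else 0"])
     (simp add: entry_monomial_def if_distrib[of "\<lambda>c. c * _"] sum.delta'
         finite_lists_length_eq_UNIV cong: if_cong)

lemma sum_lists_length_add:
  "(\<Sum>xs\<in>{xs. length xs = p + q}. h xs)
     = (\<Sum>ys\<in>{ys. length ys = p}. \<Sum>zs\<in>{zs. length zs = q}. h (ys @ zs))"
proof -
  have "bij_betw (\<lambda>(ys, zs). ys @ zs) ({ys. length ys = p} \<times> {zs. length zs = q})
      {xs. length xs = p + q}"
    by (rule bij_betwI[where g = "\<lambda>xs. (take p xs, drop p xs)"]) auto
  then have "(\<Sum>xs\<in>{xs. length xs = p + q}. h xs)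
      = (\<Sum>(ys, zs)\<in>{ys. length ys = p} \<times> {zs. length zs = q}. h (ys @ zs))"
    by (subst sum.reindex_bij_betw[symmetric]) (auto simp: case_prod_beta')
  then show ?thesis
    by (simp add: sum.cartesian_product)
qed

lemma bihom_poly_mult:
  assumes "bihom_poly p f" and "bihom_poly q g"
  shows "bihom_poly (p + q) (\<lambda>U. f U * g U)"
proof -
  let ?L = "\<lambda>n. {xs :: ('n \<times> 'n) list. length xs = n}"
  let ?M = "\<lambda>a b U. entry_monomial a U * cnj (entry_monomial b U)"
  from assms obtain c d where
    f: "f = (\<lambda>U. \<Sum>a\<in>?L p. \<Sum>b\<in>?L p. c a b * entry_monomial a U * cnj (entry_monomial b U))" and
    g: "g = (\<lambda>U. \<Sum>a\<in>?L q. \<Sum>b\<in>?L q. d a b * entry_monomial a U * cnj (entry_monomial b U))"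
    unfolding bihom_poly_iff_entry_monomials by blast
  define e where "e a b = c (take p a) (take p b) * d (drop p a) (drop p b)" for a b
  have "f U * g U = (\<Sum>a\<in>?L (p + q). \<Sum>b\<in>?L (p + q).
      e a b * entry_monomial a U * cnj (entry_monomial b U))" for U
  proof -
    have "(\<Sum>a\<in>?L (p + q). \<Sum>b\<in>?L (p + q). e a b * entry_monomial a U * cnj (entry_monomial b U))
       = (\<Sum>a\<in>?L p. \<Sum>a'\<in>?L q. \<Sum>b\<in>?L p. \<Sum>b'\<in>?L q.
            (c a b * ?M a b U) * (d a' b' * ?M a' b' U))"
      unfolding sum_lists_length_add
      by (intro sum.cong refl) (simp add: e_def entry_monomial_append mult_ac)
    also have "\<dots> = (\<Sum>a\<in>?L p. \<Sum>b\<in>?L p. \<Sum>a'\<in>?L q. \<Sum>b'\<in>?L q.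
            (c a b * ?M a b U) * (d a' b' * ?M a' b' U))"
      by (intro sum.cong refl sum.swap)
    also have "\<dots> = f U * g U"
      unfolding f g by (simp only: sum_distrib_right, simp only: sum_distrib_left, simp add: mult_ac)
    finally show ?thesis ..
  qed
  then show ?thesis
    unfolding bihom_poly_iff_entry_monomials by blast
qed

lemma bihom_poly_power:
  assumes "bihom_poly p f"
  shows "bihom_poly (p * n) (\<lambda>U. f U ^ n)"
proof (induction n)
  case 0
  show ?case
    using bihom_poly_const[of 1] by simp
next
  case (Suc n)
  show ?case
    using bihom_poly_mult[OF assms Suc] by (simp add: add.commute)
qed

lemma bihom_poly_cmod_bra_ket_sq:
  "bihom_poly 1 (\<lambda>U::complex^'n::finite^'n. of_real ((cmod (bra_ket a U b))\<^sup>2))"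
proof -
  have "bra_ket a U b = (\<Sum>i\<in>UNIV. \<Sum>j\<in>UNIV. cnj (a$i) * b$j * U$i$j)" for U :: "complex^'n^'n"
    by (simp add: bra_ket_def matrix_vector_mult_def sum_distrib_left mult_ac)
  then have "of_real ((cmod (bra_ket a U b))\<^sup>2) = (\<Sum>i\<in>UNIV. \<Sum>k\<in>UNIV. \<Sum>j\<in>UNIV. \<Sum>l\<in>UNIV.
      (cnj (a$i) * b$j * a$k * cnj (b$l)) * (U$i$j * cnj (U$k$l)))" for U :: "complex^'n^'n"
    unfolding complex_norm_square by (simp add: sum_product mult_ac)
  then show ?thesis
    by (simp only:) (intro bihom_poly_sum finite bihom_poly_cmult bihom_poly_entry_cnj_entry)
qed

text \<open>Multiplying by powers of this polynomial raises the degree of a balanced polynomial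
  without changing its values on \<open>U(d)\<close>.\<close>

definition frobenius_normalized :: "complex^'n::finite^'n \<Rightarrow> complex" where
  "frobenius_normalized U = (\<Sum>i\<in>UNIV. \<Sum>j\<in>UNIV. U$i$j * cnj (U$i$j)) / of_nat CARD('n)"

lemma bihom_poly_frobenius_normalized: "bihom_poly 1 frobenius_normalized"
  unfolding frobenius_normalized_def[abs_def] divide_inverse
  by (subst mult.commute) (intro bihom_poly_cmult bihom_poly_sum finite bihom_poly_entry_cnj_entry)

lemma unitary_frobenius_normalized: "unitary_mat U \<Longrightarrow> frobenius_normalized U = 1"
proof -
  assume "unitary_mat U"
  have "(\<Sum>i\<in>UNIV. \<Sum>j\<in>UNIV. U$i$j * cnj (U$i$j)) = of_real (\<Sum>i\<in>UNIV. \<Sum>j\<in>UNIV. (cmod (U$i$j))\<^sup>2)"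
    by (simp only: of_real_sum complex_norm_square)
  then show ?thesis
    using unitary_sum_cmod_entries[OF \<open>unitary_mat U\<close>] by (simp add: frobenius_normalized_def)
qed

lemma approx_design_mono:
  assumes H: "is_haar_measure H" and D: "approx_design H \<epsilon> t D" and "s \<le> t"
  shows "approx_design H \<epsilon> s D"
proof -
  have supp: "set_pmf D \<subseteq> unitary_group"
    using D by (simp add: approx_design_def)
  have "(1 - \<epsilon>) * (\<integral>U. Re (f U) \<partial>H) \<le> measure_pmf.expectation D (\<lambda>U. Re (f U)) \<and>
        measure_pmf.expectation D (\<lambda>U. Re (f U)) \<le> (1 + \<epsilon>) * (\<integral>U. Re (f U) \<partial>H)"
    if f: "bihom_poly s f" and pos: "\<forall>U\<in>unitary_group. f U \<in> \<real> \<and> 0 \<le> Re (f U)" for f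
  proof -
    define g where "g U = f U * frobenius_normalized U ^ (t - s)" for U
    have g_eq: "g U = f U" if "U \<in> unitary_group" for U
      using that by (simp add: g_def unitary_group_def unitary_frobenius_normalized)
    have "bihom_poly t g"
      using bihom_poly_mult[OF f bihom_poly_power[OF bihom_poly_frobenius_normalized, of "t - s"]] \<open>s \<le> t\<close>
      by (simp add: g_def[abs_def])
    moreover have "\<forall>U\<in>unitary_group. g U \<in> \<real> \<and> 0 \<le> Re (g U)"
      using pos g_eq by simp
    ultimately have "(1 - \<epsilon>) * (\<integral>U. Re (g U) \<partial>H) \<le> measure_pmf.expectation D (\<lambda>U. Re (g U)) \<and>
        measure_pmf.expectation D (\<lambda>U. Re (g U)) \<le> (1 + \<epsilon>) * (\<integral>U. Re (g U) \<partial>H)"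
      using D by (simp add: approx_design_def)
    moreover have "(\<integral>U. Re (g U) \<partial>H) = (\<integral>U. Re (f U) \<partial>H)"
      using \<open>bihom_poly t g\<close> f g_eq
      by (intro haar_integral_cong_unitary[OF H])
         (auto intro!: continuous_intros continuous_on_bihom_poly simp: unitary_group_def)
    moreover have "measure_pmf.expectation D (\<lambda>U. Re (g U)) = measure_pmf.expectation D (\<lambda>U. Re (f U))"
      using supp g_eq by (intro integral_cong_AE) (auto intro!: AE_pmfI)
    ultimately show ?thesis
      by simp
  qed
  with supp show ?thesis
    by (simp add: approx_design_def)
qed

lemma approx_design_real_poly:
  assumes "approx_design H \<epsilon> t D" and "bihom_poly t (\<lambda>U. complex_of_real (g U))"
    and "\<And>U. unitary_mat U \<Longrightarrow> 0 \<le> g U"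
  shows "(1 - \<epsilon>) * integral\<^sup>L H g \<le> measure_pmf.expectation D g"
    and "measure_pmf.expectation D g \<le> (1 + \<epsilon>) * integral\<^sup>L H g"
  using assms unfolding approx_design_def
  by (auto dest!: spec[of _ "\<lambda>U. complex_of_real (g U)"] simp: unitary_group_def)

section \<open>The Paley--Zygmund inequality\<close>

text \<open>The pointwise bound
  \<open>X \<le> (X\<^sup>2/l + l \<cdot> 1\<^bsub>X > c\<^esub>)/2 + c\<close> (AM--GM) is integrated and \<open>l\<close> is optimised.\<close>

lemma (in prob_space) paley_zygmund:
  fixes X :: "'a \<Rightarrow> real"
  assumes X: "integrable M X" and X2: "integrable M (\<lambda>x. (X x)\<^sup>2)"
    and "0 \<le> c" and "c \<le> m1" and m1: "m1 \<le> expectation X"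
    and m2: "expectation (\<lambda>x. (X x)\<^sup>2) \<le> m2"
  shows "(m1 - c)\<^sup>2 / m2 \<le> prob {x \<in> space M. c < X x}"
proof (cases "c < m1 \<and> 0 < m2")
  case False
  then have "(m1 - c)\<^sup>2 / m2 \<le> 0"
    using \<open>c \<le> m1\<close> by (auto intro: divide_nonneg_nonpos)
  then show ?thesis
    using measure_nonneg order_trans by blast
next
  case True
  define A where "A = {x \<in> space M. c < X x}"
  define l where "l = m2 / (m1 - c)"
  have l: "0 < l"
    using True by (simp add: l_def)
  have A: "A \<in> events"
    unfolding A_def using borel_measurable_integrable[OF X] by measurable
  then have intA: "integrable M (indicator A :: 'a \<Rightarrow> real)"
    by (simp add: less_top[symmetric])
  have "X x \<le> ((X x)\<^sup>2 / l + l * indicator A x) / 2 + c" if "x \<in> space M" for x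
  proof (cases "x \<in> A")
    case True
    have "0 \<le> (X x - l)\<^sup>2 / l"
      using l by simp
    then have "2 * X x \<le> (X x)\<^sup>2 / l + l"
      using l by (simp add: power2_eq_square field_simps)
    then show ?thesis
      using True \<open>0 \<le> c\<close> by (simp add: field_simps)
  next
    case False
    have "0 \<le> (X x)\<^sup>2 / l"
      using l by simp
    with False that show ?thesis
      by (simp add: A_def)
  qed
  then have "expectation X \<le> expectation (\<lambda>x. ((X x)\<^sup>2 / l + l * indicator A x) / 2 + c)"
    using X X2 intA
    by (intro integral_mono) (auto intro!: Bochner_Integration.integrable_add integrable_divide
        integrable_mult_right)
  also have "\<dots> = (expectation (\<lambda>x. (X x)\<^sup>2) / l + l * prob A) / 2 + c"
    using X2 intA A by (simp add: Bochner_Integration.integral_add prob_space)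
  finally have "m1 - c \<le> (m2 / l + l * prob A) / 2"
    using m1 m2 l by (smt (verit) divide_right_mono)
  then have "m1 - c \<le> l * prob A"
    using True by (simp add: l_def)
  then have "(m1 - c) * (m1 - c) \<le> m2 * prob A"
    using True by (simp add: l_def field_simps)
  then show ?thesis
    using True by (simp add: A_def power2_eq_square pos_divide_le_eq mult.commute)
qed

section \<open>Moments under an approximate design\<close>

lemma integrable_pmf_bra_ket_power:
  fixes D :: "(complex^'n::finite^'n) pmf"
  assumes "set_pmf D \<subseteq> unitary_group"
  shows "integrable (measure_pmf D) (\<lambda>U. (cmod (bra_ket a U b))^k)"
  using assms
  by (intro measure_pmf.integrable_const_bound[where B = "(real CARD('n) * norm a * norm b)^k"])
     (auto intro!: AE_pmfI power_mono norm_bra_ket_le simp: unitary_group_def)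

lemma approx_design_cmod_bra_ket_sq:
  fixes H :: "(complex^'n::finite^'n) measure"
  assumes "is_haar_measure H" and "approx_design H \<epsilon> t D" and "1 \<le> t"
    and "norm a = 1" and "norm b = 1"
  shows "(1 - \<epsilon>) / real CARD('n) \<le> measure_pmf.expectation D (\<lambda>U. (cmod (bra_ket a U b))\<^sup>2)"
  using approx_design_real_poly(1)[OF approx_design_mono[OF assms(1-3)] bihom_poly_cmod_bra_ket_sq[of a b]]
    haar_integral_cmod_bra_ket_sq[OF assms(1,4,5)]
  by simp

lemma approx_design_cmod_bra_ket_pow4:
  fixes H :: "(complex^'n::finite^'n) measure"
  assumes "is_haar_measure H" and "approx_design H \<epsilon> t D" and "2 \<le> t"
    and "norm a = 1" and "norm b = 1"
  shows "measure_pmf.expectation D (\<lambda>U. ((cmod (bra_ket a U b))\<^sup>2)\<^sup>2)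
    \<le> (1 + \<epsilon>) * (2 / (real CARD('n) * (real CARD('n) + 1)))"
proof -
  have "bihom_poly (1 * 2) (\<lambda>U. (complex_of_real ((cmod (bra_ket a U b))\<^sup>2))\<^sup>2)"
    by (intro bihom_poly_power bihom_poly_cmod_bra_ket_sq)
  then show ?thesis
    using approx_design_real_poly(2)[OF approx_design_mono[OF assms(1-3)],
        of "\<lambda>U. ((cmod (bra_ket a U b))\<^sup>2)\<^sup>2"]
      haar_integral_cmod_bra_ket_pow4[OF assms(1,4,5)]
    by (simp flip: power_mult)
qed

theorem lemma2:
  fixes H :: "(complex^'n::finite^'n) measure"
    and D :: "(complex^'n^'n) pmf"
    and \<alpha> \<beta> :: "complex^'n"
    and t :: nat and \<epsilon> \<gamma> :: real
  assumes "CARD('n) \<ge> 2"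
    and "t \<ge> 2"
    and "0 \<le> \<epsilon>" and "\<epsilon> < 1"
    and "is_haar_measure H"
    and "approx_design H \<epsilon> t D"
    and "norm \<alpha> = 1" and "norm \<beta> = 1"
    and "0 \<le> \<gamma>" and "\<gamma> \<le> 1 - \<epsilon>"
  shows "measure_pmf.prob D {U. (cmod (bra_ket \<alpha> U \<beta>))^2 > \<gamma> / real CARD('n)}
           \<ge> (1 - \<epsilon> - \<gamma>)^2 / (2 * (1 + \<epsilon>))"
proof -
  define d where "d = real CARD('n)"
  let ?X = "\<lambda>U. (cmod (bra_ket \<alpha> U \<beta>))\<^sup>2"
  have d: "0 < d"
    by (simp add: d_def)
  have supp: "set_pmf D \<subseteq> unitary_group"
    using assms(6) by (simp add: approx_design_def)
  have m1: "(1 - \<epsilon>) / d \<le> measure_pmf.expectation D ?X"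
    using approx_design_cmod_bra_ket_sq[OF assms(5,6) _ assms(7,8)] assms(2) by (simp add: d_def)
  have "measure_pmf.expectation D (\<lambda>U. (?X U)\<^sup>2) \<le> (1 + \<epsilon>) * (2 / (d * (d + 1)))"
    using approx_design_cmod_bra_ket_pow4[OF assms(5,6,2,7,8)] by (simp add: d_def)
  also have "\<dots> \<le> (1 + \<epsilon>) * (2 / d\<^sup>2)"
    using d assms(3) by (intro mult_left_mono divide_left_mono) (auto simp: power2_eq_square)
  finally have m2: "measure_pmf.expectation D (\<lambda>U. (?X U)\<^sup>2) \<le> (1 + \<epsilon>) * (2 / d\<^sup>2)" .
  have "((1 - \<epsilon>) / d - \<gamma> / d)\<^sup>2 / ((1 + \<epsilon>) * (2 / d\<^sup>2))
      \<le> measure_pmf.prob D {U. \<gamma> / d < ?X U}"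
    using m1 m2 d assms(9,10)
    by (intro measure_pmf.paley_zygmund[simplified] integrable_pmf_bra_ket_power[OF supp])
       (auto simp: divide_right_mono power_mult[symmetric] integrable_pmf_bra_ket_power[OF supp])
  moreover have "((1 - \<epsilon>) / d - \<gamma> / d)\<^sup>2 = (1 - \<epsilon> - \<gamma>)\<^sup>2 / d\<^sup>2"
    by (simp add: power_divide flip: diff_divide_distrib)
  ultimately show ?thesis
    using d assms(3) by (simp add: d_def ac_simps)
qed

end
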